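(* Let $L$ be a $c$-lattice and $S$ a multiplicatively closed subset of $L$ (with $1\in S$, $0\notin S$). Let $q$ be an $S$-$p$-primary element of $L$ and let $x\in L$ be such that $sx\not\le q$ for all $s\in S$. Then $(q:sx)$ is an $S$-primary element of $L$ for every $s\in S$, and there exists $t\in S$ such that $t\sqrt{(q:sx)}\le p\le\sqrt{(q:sx)}$ for all $s\in S$. In particular, $(\sqrt{(q:x)})_S=p_S$.
   Context: A multiplicative lattice is a complete lattice with a commutative, associative multiplication distributing over arbitrary joins, with $1$ as identity; $L_*$ is the set of compact elements. A $c$-lattice is a compactly generated multiplicative lattice with $1$ compact in which the product of two compact elements is compact. A multiplicatively closed subset is a nonempty $S\subseteq L_*$ closed under multiplication. $(a:b)=\bigvee\{y\mid yb\le a\}$; $\sqrt a=\bigvee\{y\in L_*\mid y^n\le a\text{ for some }n\in\mathbb{Z}^+\}$; the $S$-saturation is $a_S=\bigvee\{y\in L\mid sy\le a\text{ for some }s\in S\}$. A proper element $p$ with $t\not\le p$ for all $t\in S$ is $S$-prime if there is $s\in S$ such that $ab\le p$ implies $sa\le p$ or $sb\le p$ for all $a,b$. A proper element $q$ with $t\not\le q$ for all $t\in S$ is $S$-primary if there is $s\in S$ such that $cd\le q$ implies $sc\le q$ or $sd\le\sqrt q$ for all $c,d\in L$; it is $S$-$p$-primary if moreover $p=\sqrt q$ is $S$-prime. *)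

theory Defs
  imports Main
begin

definition mult_lattice :: "'a::{complete_lattice, comm_monoid_mult} itself \<Rightarrow> bool" where
  "mult_lattice _ \<longleftrightarrow> (1::'a) = top \<and> (\<forall>(a::'a) B. a * Sup B = Sup ((\<lambda>b. a * b) ` B))"

definition compact_el :: "'a::complete_lattice \<Rightarrow> bool" where
  "compact_el c \<longleftrightarrow> (\<forall>A. c \<le> Sup A \<longrightarrow> (\<exists>F\<subseteq>A. finite F \<and> c \<le> Sup F))"

definition compacts :: "'a::complete_lattice set" where
  "compacts = {c. compact_el c}"

definition c_lattice :: "'a::{complete_lattice, comm_monoid_mult} itself \<Rightarrow> bool" where
  "c_lattice T \<longleftrightarrow> mult_lattice T
     \<and> (\<forall>a::'a. a = Sup {c. compact_el c \<and> c \<le> a})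
     \<and> compact_el (1::'a)
     \<and> (\<forall>a b::'a. compact_el a \<longrightarrow> compact_el b \<longrightarrow> compact_el (a * b))"

definition mult_closed :: "'a::{complete_lattice, comm_monoid_mult} set \<Rightarrow> bool" where
  "mult_closed S \<longleftrightarrow> S \<noteq> {} \<and> S \<subseteq> compacts \<and> (\<forall>a\<in>S. \<forall>b\<in>S. a * b \<in> S)"

definition colon :: "'a::{complete_lattice, comm_monoid_mult} \<Rightarrow> 'a \<Rightarrow> 'a" where
  "colon a b = Sup {y. y * b \<le> a}"

definition rad :: "'a::{complete_lattice, comm_monoid_mult} \<Rightarrow> 'a" where
  "rad a = Sup {y. compact_el y \<and> (\<exists>n::nat. n > 0 \<and> y ^ n \<le> a)}"

definition sat :: "'a::{complete_lattice, comm_monoid_mult} set \<Rightarrow> 'a \<Rightarrow> 'a" where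
  "sat S a = Sup {y. \<exists>s\<in>S. s * y \<le> a}"

definition S_prime :: "'a::{complete_lattice, comm_monoid_mult} set \<Rightarrow> 'a \<Rightarrow> bool" where
  "S_prime S p \<longleftrightarrow> p \<noteq> 1 \<and> (\<forall>t\<in>S. \<not> t \<le> p)
     \<and> (\<exists>s\<in>S. \<forall>a b. a * b \<le> p \<longrightarrow> s * a \<le> p \<or> s * b \<le> p)"

definition S_primary :: "'a::{complete_lattice, comm_monoid_mult} set \<Rightarrow> 'a \<Rightarrow> bool" where
  "S_primary S q \<longleftrightarrow> q \<noteq> 1 \<and> (\<forall>t\<in>S. \<not> t \<le> q)
     \<and> (\<exists>s\<in>S. \<forall>c d. c * d \<le> q \<longrightarrow> s * c \<le> q \<or> s * d \<le> rad q)"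

definition S_p_primary :: "'a::{complete_lattice, comm_monoid_mult} set \<Rightarrow> 'a \<Rightarrow> 'a \<Rightarrow> bool" where
  "S_p_primary S p q \<longleftrightarrow> S_primary S q \<and> p = rad q \<and> S_prime S p"

end

theory Submission
  imports Defs
begin

text \<open>Since \<open>q \<le> (q : y)\<close>, every element between \<open>q\<close> and \<open>(q : y)\<close> inherits the
\<open>S\<close>-primary condition of \<open>q\<close> through the residuation law \<open>c \<le> (q : y) \<longleftrightarrow> c y \<le> q\<close>.
For the radical, if \<open>z\<^sup>n \<le> (q : y)\<close> with \<open>s y \<not>\<le> q\<close> for all \<open>s \<in> S\<close>, then \<open>y z\<^sup>n \<le> q\<close>
forces \<open>s\<^sub>0 z\<^sup>n \<le> \<surd>q = p\<close>, and peeling off the factors of \<open>z\<^sup>n\<close> one at a time with the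
\<open>S\<close>-prime witness \<open>s\<^sub>1\<close> of \<open>p\<close> gives \<open>s\<^sub>1 z \<le> p\<close>; as \<open>s\<^sub>1\<close> does not depend on \<open>y\<close>,
it bounds all the radicals \<open>\<surd>(q : s x)\<close> at once. The sandwich
\<open>s\<^sub>1 \<surd>(q : x) \<le> p \<le> \<surd>(q : x)\<close> then identifies the \<open>S\<close>-saturations.\<close>

lemma mult_lattice_Sup_distrib:
  fixes a :: "'a::{complete_lattice, comm_monoid_mult}"
  assumes "mult_lattice TYPE('a)"
  shows "a * Sup B = Sup ((\<lambda>b. a * b) ` B)"
  using assms unfolding mult_lattice_def by blast

lemma mult_lattice_mult_left_mono:
  fixes a b c :: "'a::{complete_lattice, comm_monoid_mult}"
  assumes "mult_lattice TYPE('a)" and "b \<le> c"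
  shows "a * b \<le> a * c"
proof -
  have "a * c = a * Sup {b, c}"
    using assms(2) by (simp add: sup_absorb2)
  also have "\<dots> = sup (a * b) (a * c)"
    using mult_lattice_Sup_distrib[OF assms(1), of a "{b, c}"] by simp
  finally show ?thesis
    by (simp add: le_iff_sup sup_commute)
qed

lemma mult_lattice_mult_right_mono:
  fixes a b c :: "'a::{complete_lattice, comm_monoid_mult}"
  assumes "mult_lattice TYPE('a)" and "b \<le> c"
  shows "b * a \<le> c * a"
  using mult_lattice_mult_left_mono[OF assms] by (simp add: mult.commute)

lemma colon_mult_le:
  fixes a b :: "'a::{complete_lattice, comm_monoid_mult}"
  assumes "mult_lattice TYPE('a)"
  shows "colon a b * b \<le> a"
proof -
  have "colon a b * b = Sup ((\<lambda>y. b * y) ` {y. y * b \<le> a})"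
    unfolding colon_def by (simp add: mult.commute mult_lattice_Sup_distrib[OF assms])
  also have "\<dots> \<le> a"
    by (auto intro!: Sup_least simp: mult.commute)
  finally show ?thesis .
qed

lemma le_colon_iff:
  fixes a b y :: "'a::{complete_lattice, comm_monoid_mult}"
  assumes "mult_lattice TYPE('a)"
  shows "y \<le> colon a b \<longleftrightarrow> y * b \<le> a"
proof
  assume "y \<le> colon a b"
  then have "y * b \<le> colon a b * b"
    using mult_lattice_mult_right_mono[OF assms] by blast
  then show "y * b \<le> a"
    using colon_mult_le[OF assms] order_trans by blast
next
  assume "y * b \<le> a"
  then show "y \<le> colon a b"
    unfolding colon_def by (auto intro: Sup_upper)
qed

lemma le_colon_self:
  fixes a b :: "'a::{complete_lattice, comm_monoid_mult}"
  assumes "mult_lattice TYPE('a)"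
  shows "a \<le> colon a b"
proof -
  have "b \<le> 1"
    using assms unfolding mult_lattice_def by (metis top_greatest)
  then have "a * b \<le> a"
    using mult_lattice_mult_left_mono[OF assms, of b 1 a] by simp
  then show ?thesis
    using le_colon_iff[OF assms] by blast
qed

lemma rad_mono:
  fixes a b :: "'a::{complete_lattice, comm_monoid_mult}"
  assumes "a \<le> b"
  shows "rad a \<le> rad b"
  unfolding rad_def using assms by (auto intro!: Sup_subset_mono dest: order_trans)

lemma mult_closedD:
  assumes "mult_closed S" and "s \<in> S" and "t \<in> S"
  shows "s * t \<in> S"
  using assms unfolding mult_closed_def by blast

lemma mult_closed_not_le_mult:
  assumes "mult_closed S" and "\<forall>t\<in>S. \<not> t * x \<le> q" and "s \<in> S"
  shows "\<forall>t\<in>S. \<not> t * (s * x) \<le> q"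
  using assms mult_closedD by (metis mult.assoc)

lemma S_prime_witness_power:
  fixes p z :: "'a::{complete_lattice, comm_monoid_mult}"
  assumes S: "mult_closed S" and p_avoids_S: "\<forall>t\<in>S. \<not> t \<le> p"
    and s: "s \<in> S" and s_prime: "\<forall>a b. a * b \<le> p \<longrightarrow> s * a \<le> p \<or> s * b \<le> p"
    and "0 < n" and "t \<in> S" and "t * z ^ n \<le> p"
  shows "s * z \<le> p"
  using \<open>0 < n\<close> \<open>t \<in> S\<close> \<open>t * z ^ n \<le> p\<close>
proof (induction n arbitrary: t rule: nat_induct_non_zero)
  case 1
  then have "s * t \<le> p \<or> s * z \<le> p"
    using s_prime by simp
  then show ?case
    using p_avoids_S mult_closedD[OF S s \<open>t \<in> S\<close>] by blast
next
  case (Suc n)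
  have "(t * z ^ n) * z \<le> p"
    using Suc.prems(2) by (simp add: mult_ac)
  then have "(s * t) * z ^ n \<le> p \<or> s * z \<le> p"
    using s_prime by (metis mult.assoc)
  then show ?case
    using Suc.IH mult_closedD[OF S s \<open>t \<in> S\<close>] by blast
qed

lemma colon_S_primary:
  fixes q x :: "'a::{complete_lattice, comm_monoid_mult}"
  assumes ml: "mult_lattice TYPE('a)" and S: "mult_closed S"
    and q: "S_primary S q" and x: "\<forall>s\<in>S. \<not> s * x \<le> q"
  shows "S_primary S (colon q x)"
proof -
  let ?a = "colon q x"
  obtain s0 where "s0 \<in> S"
    and s0: "\<forall>c d. c * d \<le> q \<longrightarrow> s0 * c \<le> q \<or> s0 * d \<le> rad q"
    using q unfolding S_primary_def by blast
  have avoids_S: "\<forall>t\<in>S. \<not> t \<le> ?a"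
    using x le_colon_iff[OF ml] by blast
  moreover have "?a \<noteq> 1"
    using avoids_S \<open>s0 \<in> S\<close> ml unfolding mult_lattice_def by force
  moreover have "s0 * c \<le> ?a \<or> s0 * d \<le> rad ?a" if "c * d \<le> ?a" for c d
  proof -
    have "(c * x) * d \<le> q"
      using that le_colon_iff[OF ml] by (simp add: mult_ac)
    then have "s0 * (c * x) \<le> q \<or> s0 * d \<le> rad q"
      using s0 by blast
    then have "(s0 * c) * x \<le> q \<or> s0 * d \<le> rad q"
      by (simp add: mult.assoc)
    then show ?thesis
      using le_colon_iff[OF ml] rad_mono[OF le_colon_self[OF ml]] order_trans by blast
  qed
  ultimately show ?thesis
    unfolding S_primary_def using \<open>s0 \<in> S\<close> by blast
qed

lemma S_prime_witness_mult_rad_colon_le: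
  fixes p q x :: "'a::{complete_lattice, comm_monoid_mult}"
  assumes ml: "mult_lattice TYPE('a)" and S: "mult_closed S"
    and pq: "S_p_primary S p q"
    and s: "s \<in> S" and s_prime: "\<forall>a b. a * b \<le> p \<longrightarrow> s * a \<le> p \<or> s * b \<le> p"
    and x: "\<forall>t\<in>S. \<not> t * x \<le> q"
  shows "s * rad (colon q x) \<le> p"
proof -
  obtain s0 where "s0 \<in> S"
    and s0: "\<forall>c d. c * d \<le> q \<longrightarrow> s0 * c \<le> q \<or> s0 * d \<le> rad q"
    using pq unfolding S_p_primary_def S_primary_def by blast
  have p: "p = rad q" and p_avoids_S: "\<forall>t\<in>S. \<not> t \<le> p"
    using pq unfolding S_p_primary_def S_prime_def by blast+
  have "s * z \<le> p" if "0 < n" and "z ^ n \<le> colon q x" for z and n :: nat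
  proof -
    have "x * z ^ n \<le> q"
      using that(2) le_colon_iff[OF ml] by (simp add: mult.commute)
    then have "s0 * z ^ n \<le> p"
      using s0 x \<open>s0 \<in> S\<close> p by (metis mult.commute)
    then show ?thesis
      using S_prime_witness_power[OF S p_avoids_S s s_prime \<open>0 < n\<close> \<open>s0 \<in> S\<close>] by blast
  qed
  then show ?thesis
    unfolding rad_def mult_lattice_Sup_distrib[OF ml] by (auto intro!: Sup_least)
qed

lemma sat_mono:
  assumes "a \<le> b"
  shows "sat S a \<le> sat S b"
  unfolding sat_def using assms by (auto intro!: Sup_subset_mono dest: order_trans)

lemma sat_le_if_mult_le:
  fixes a b :: "'a::{complete_lattice, comm_monoid_mult}"
  assumes ml: "mult_lattice TYPE('a)" and S: "mult_closed S"
    and "t \<in> S" and "t * a \<le> b"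
  shows "sat S a \<le> sat S b"
  unfolding sat_def
proof (rule Sup_least)
  fix y assume "y \<in> {y. \<exists>s\<in>S. s * y \<le> a}"
  then obtain s where "s \<in> S" and "s * y \<le> a"
    by blast
  then have "(t * s) * y \<le> b"
    using mult_lattice_mult_left_mono[OF ml, of "s * y" a t] \<open>t * a \<le> b\<close>
    by (simp add: mult.assoc)
  then show "y \<le> Sup {y. \<exists>s\<in>S. s * y \<le> b}"
    using mult_closedD[OF S \<open>t \<in> S\<close> \<open>s \<in> S\<close>] by (auto intro: Sup_upper)
qed

theorem mainTheorem13:
  fixes S :: "'a::{complete_lattice, comm_monoid_mult} set" and p q x :: 'a
  assumes "c_lattice TYPE('a)"
    and "mult_closed S" and "1 \<in> S" and "bot \<notin> S"
    and "S_p_primary S p q"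
    and "\<forall>s\<in>S. \<not> s * x \<le> q"
  shows "(\<forall>s\<in>S. S_primary S (colon q (s * x)))
    \<and> (\<exists>t\<in>S. \<forall>s\<in>S. t * rad (colon q (s * x)) \<le> p \<and> p \<le> rad (colon q (s * x)))
    \<and> sat S (rad (colon q x)) = sat S p"
proof -
  have ml: "mult_lattice TYPE('a)"
    using assms(1) unfolding c_lattice_def by blast
  obtain t where "t \<in> S" and t_prime: "\<forall>a b. a * b \<le> p \<longrightarrow> t * a \<le> p \<or> t * b \<le> p"
    using assms(5) unfolding S_p_primary_def S_prime_def by blast
  have p_le_rad: "p \<le> rad (colon q y)" for y
    using assms(5) rad_mono[OF le_colon_self[OF ml]] unfolding S_p_primary_def by blast
  have sx: "\<forall>r\<in>S. \<not> r * (s * x) \<le> q" if "s \<in> S" for s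
    using mult_closed_not_le_mult[OF assms(2,6) that] .
  have primary: "\<forall>s\<in>S. S_primary S (colon q (s * x))"
    using colon_S_primary[OF ml assms(2)] sx assms(5) unfolding S_p_primary_def by blast
  have bound: "t * rad (colon q y) \<le> p" if "\<forall>r\<in>S. \<not> r * y \<le> q" for y
    using S_prime_witness_mult_rad_colon_le[OF ml assms(2,5) \<open>t \<in> S\<close> t_prime that] .
  have "sat S (rad (colon q x)) = sat S p"
    using sat_le_if_mult_le[OF ml assms(2) \<open>t \<in> S\<close> bound[OF assms(6)]] sat_mono[OF p_le_rad]
    by (rule antisym)
  then show ?thesis
    using primary bound sx p_le_rad \<open>t \<in> S\<close> by blast
qed

end
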